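(* Let $\mathcal{G}$ be a finite simple graph, let $k\geq 1$, and let $\mathcal{G}^{k+1}$ be its $(k+1)$-core. Then for every $j\ge k$, every $j$-cycle of the clique complex $\widehat{\mathcal{G}}$ (i.e. every element of $\ker\partial_j$ in the simplicial chain complex $C_\bullet(\widehat{\mathcal{G}})$) is supported on simplices of $\widehat{\mathcal{G}^{k+1}}$, every $(j+1)$-simplex of $\widehat{\mathcal{G}}$ lies in $\widehat{\mathcal{G}^{k+1}}$, and consequently the inclusion $\widehat{\mathcal{G}^{k+1}}\hookrightarrow\widehat{\mathcal{G}}$ induces an isomorphism $H_j(\widehat{\mathcal{G}^{k+1}})\cong H_j(\widehat{\mathcal{G}})$.
   Context: For a graph $\mathcal{H}$, $\widehat{\mathcal{H}}$ denotes its clique (flag) complex, whose $r$-simplices are the sets of $r+1$ pairwise adjacent vertices. Homology is simplicial homology with coefficients in a fixed field. The $(k+1)$-core of $\mathcal{G}$ is the subgraph obtained by iteratively deleting vertices (with their incident edges) of degree less than $k+1$; equivalently, the largest induced subgraph in which every vertex has degree at least $k+1$. *)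

theory Defs
  imports Main
begin

definition simple_graph :: "'a set \<Rightarrow> ('a \<Rightarrow> 'a \<Rightarrow> bool) \<Rightarrow> bool" where
  "simple_graph V E \<longleftrightarrow> finite V \<and> (\<forall>u v. E u v \<longrightarrow> E v u) \<and> (\<forall>v. \<not> E v v)
     \<and> (\<forall>u v. E u v \<longrightarrow> u \<in> V \<and> v \<in> V)"

definition clique_simplices :: "'a set \<Rightarrow> ('a \<Rightarrow> 'a \<Rightarrow> bool) \<Rightarrow> nat \<Rightarrow> 'a set set" where
  "clique_simplices V E r = {\<sigma>. \<sigma> \<subseteq> V \<and> card \<sigma> = Suc r \<and>
      (\<forall>x\<in>\<sigma>. \<forall>y\<in>\<sigma>. x \<noteq> y \<longrightarrow> E x y)}"

definition min_degree_set :: "('a \<Rightarrow> 'a \<Rightarrow> bool) \<Rightarrow> nat \<Rightarrow> 'a set \<Rightarrow> bool" where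
  "min_degree_set E m W \<longleftrightarrow> (\<forall>v\<in>W. m \<le> card {u\<in>W. E v u})"

text \<open>Vertex set of the m-core: the largest vertex set inducing a subgraph of minimum
degree at least m (the union of all such sets).\<close>

definition core_vertices :: "'a set \<Rightarrow> ('a \<Rightarrow> 'a \<Rightarrow> bool) \<Rightarrow> nat \<Rightarrow> 'a set" where
  "core_vertices V E m = \<Union>{W. W \<subseteq> V \<and> min_degree_set E m W}"

definition core_edges :: "'a set \<Rightarrow> ('a \<Rightarrow> 'a \<Rightarrow> bool) \<Rightarrow> nat \<Rightarrow> 'a \<Rightarrow> 'a \<Rightarrow> bool" where
  "core_edges V E m = (\<lambda>u v. E u v \<and> u \<in> core_vertices V E m \<and> v \<in> core_vertices V E m)"

text \<open>Orientation: vertices carry a linear order, each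
simplex is oriented by the increasing order of its vertices.\<close>

definition chains :: "(nat \<Rightarrow> 'a set set) \<Rightarrow> nat \<Rightarrow> ('a set \<Rightarrow> 'k::field) set" where
  "chains S r = {c. \<forall>\<sigma>. c \<sigma> \<noteq> 0 \<longrightarrow> \<sigma> \<in> S r}"

text \<open>Incidence sign [sigma : tau] for tau = sigma minus {v}: (-1)^(position of v in sigma).\<close>

definition incidence :: "'a::linorder set \<Rightarrow> 'a set \<Rightarrow> 'k::field" where
  "incidence \<sigma> \<tau> = (-1) ^ card {u\<in>\<sigma>. u < the_elem (\<sigma> - \<tau>)}"

fun boundary :: "(nat \<Rightarrow> 'a::linorder set set) \<Rightarrow> nat \<Rightarrow> ('a set \<Rightarrow> 'k::field) \<Rightarrow> ('a set \<Rightarrow> 'k)" where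
  "boundary S 0 c = (\<lambda>\<tau>. 0)"
| "boundary S (Suc r) c = (\<lambda>\<tau>. if \<tau> \<in> S r
      then (\<Sum>\<sigma>\<in>{\<sigma>\<in>S (Suc r). \<tau> \<subseteq> \<sigma>}. incidence \<sigma> \<tau> * c \<sigma>) else 0)"

definition cycles :: "(nat \<Rightarrow> 'a::linorder set set) \<Rightarrow> nat \<Rightarrow> ('a set \<Rightarrow> 'k::field) set" where
  "cycles S r = {c \<in> chains S r. boundary S r c = (\<lambda>\<tau>. 0)}"

definition boundaries :: "(nat \<Rightarrow> 'a::linorder set set) \<Rightarrow> nat \<Rightarrow> ('a set \<Rightarrow> 'k::field) set" where
  "boundaries S r = boundary S (Suc r) ` chains S (Suc r)"

text \<open>Homology H_r = cycles / boundaries, as the set of cosets (homology classes).\<close>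

definition hom_class :: "(nat \<Rightarrow> 'a::linorder set set) \<Rightarrow> nat \<Rightarrow> ('a set \<Rightarrow> 'k::field) \<Rightarrow> ('a set \<Rightarrow> 'k) set" where
  "hom_class S r z = {z' \<in> cycles S r. (\<lambda>\<sigma>. z \<sigma> - z' \<sigma>) \<in> boundaries S r}"

definition homology :: "(nat \<Rightarrow> 'a::linorder set set) \<Rightarrow> nat \<Rightarrow> ('a set \<Rightarrow> 'k::field) set set" where
  "homology S r = hom_class S r ` cycles S r"

definition incl_induced :: "(nat \<Rightarrow> 'a::linorder set set) \<Rightarrow> (nat \<Rightarrow> 'a set set) \<Rightarrow> nat
    \<Rightarrow> ('a set \<Rightarrow> 'k::field) set \<Rightarrow> ('a set \<Rightarrow> 'k) set" where
  "incl_induced S T r X = hom_class S r (SOME z. z \<in> X)"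

end

theory Submission
  imports Defs
begin

text \<open>A vertex of a j-simplex in the support of a j-cycle has its j neighbours in that simplex;
dropping any other vertex w gives a face which, since the boundary vanishes there, lies in a
second support simplex, and that simplex contributes one more neighbour outside the first.
So the support of a j-cycle spans a subgraph of minimum degree j+1 and lies in the (k+1)-core,
as do all (j+1)-simplices, which are cliques on j+2 vertices. Hence the clique complex of the
core has the same j-cycles and j-boundaries as the whole clique complex.\<close>

lemma diff_mem_boundaries:
  assumes "a \<in> boundaries S r" "b \<in> boundaries S r"
  shows "(\<lambda>x. a x - b x) \<in> boundaries S r"
proof -
  obtain c where c: "c \<in> chains S (Suc r)" "a = boundary S (Suc r) c"
    using assms(1) unfolding boundaries_def by blast
  obtain d where d: "d \<in> chains S (Suc r)" "b = boundary S (Suc r) d"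
    using assms(2) unfolding boundaries_def by blast
  have "(\<lambda>\<sigma>. c \<sigma> - d \<sigma>) \<in> chains S (Suc r)"
    using c(1) d(1) unfolding chains_def by (simp, metis)
  moreover have "(\<lambda>x. a x - b x) = boundary S (Suc r) (\<lambda>\<sigma>. c \<sigma> - d \<sigma>)"
    unfolding c(2) d(2) by (simp add: sum_subtractf right_diff_distrib fun_eq_iff)
  ultimately show ?thesis
    unfolding boundaries_def by blast
qed

lemma zero_mem_boundaries: "(\<lambda>x. 0) \<in> boundaries S r"
proof -
  have "(\<lambda>x. 0) = boundary S (Suc r) (\<lambda>x. 0)" by auto
  moreover have "(\<lambda>x. 0) \<in> chains S (Suc r)" unfolding chains_def by auto
  ultimately show ?thesis unfolding boundaries_def by blast
qed

lemma hom_class_self: "z \<in> cycles S r \<Longrightarrow> z \<in> hom_class S r z"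
  unfolding hom_class_def using zero_mem_boundaries by auto

lemma hom_class_eq:
  assumes "z' \<in> hom_class S r z"
  shows "hom_class S r z' = hom_class S r z"
proof -
  have zz': "(\<lambda>\<sigma>. z \<sigma> - z' \<sigma>) \<in> boundaries S r"
    using assms unfolding hom_class_def by blast
  have "(\<lambda>\<sigma>. z' \<sigma> - z \<sigma>) = (\<lambda>x. 0 - (z x - z' x))" by simp
  then have z'z: "(\<lambda>\<sigma>. z' \<sigma> - z \<sigma>) \<in> boundaries S r"
    using diff_mem_boundaries[OF zero_mem_boundaries zz'] by simp
  have shift: "(\<lambda>\<sigma>. x \<sigma> - y \<sigma>) \<in> boundaries S r"
    if "(\<lambda>\<sigma>. x \<sigma> - w \<sigma>) \<in> boundaries S r" "(\<lambda>\<sigma>. w \<sigma> - y \<sigma>) \<in> boundaries S r"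
    for x w y :: "'a set \<Rightarrow> 'b"
    using diff_mem_boundaries[OF that(2) diff_mem_boundaries[OF zero_mem_boundaries that(1)]]
    by simp
  show ?thesis
    unfolding hom_class_def using shift[OF zz'] shift[OF z'z] by blast
qed

lemma incl_induced_fixes_homology:
  assumes "X \<in> homology S r"
  shows "incl_induced S T r X = X"
proof -
  obtain z where z: "z \<in> cycles S r" "X = hom_class S r z"
    using assms by (auto simp: homology_def)
  then have "(SOME z. z \<in> X) \<in> X"
    using hom_class_self by (metis someI)
  then show ?thesis
    unfolding incl_induced_def z(2) by (rule hom_class_eq)
qed

lemma bij_betw_incl_induced:
  fixes S T :: "nat \<Rightarrow> 'a::linorder set set"
  assumes "cycles T r = (cycles S r :: ('a set \<Rightarrow> 'k::field) set)"
    and "boundaries T r = (boundaries S r :: ('a set \<Rightarrow> 'k) set)"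
  shows "bij_betw (incl_induced S T r) (homology T r :: ('a set \<Rightarrow> 'k) set set) (homology S r)"
proof -
  have "homology T r = (homology S r :: ('a set \<Rightarrow> 'k) set set)"
    by (simp add: homology_def hom_class_def assms)
  then show ?thesis
    by (simp add: bij_betw_cong[of _ _ id, THEN iffD2] incl_induced_fixes_homology)
qed

definition full_subcomplex :: "(nat \<Rightarrow> 'a set set) \<Rightarrow> 'a set \<Rightarrow> nat \<Rightarrow> 'a set set" where
  "full_subcomplex S C r = {\<sigma> \<in> S r. \<sigma> \<subseteq> C}"

lemma boundary_full_subcomplex:
  assumes "finite (S r)" and c: "c \<in> chains (full_subcomplex S C) r"
  shows "boundary S r c = boundary (full_subcomplex S C) r c"
proof (cases r)
  case (Suc q)
  have "boundary S (Suc q) c \<tau> = boundary (full_subcomplex S C) (Suc q) c \<tau>" for \<tau>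
  proof (cases "\<tau> \<subseteq> C")
    case True
    have "(\<Sum>\<sigma>\<in>{\<sigma>\<in>S (Suc q). \<tau> \<subseteq> \<sigma>}. incidence \<sigma> \<tau> * c \<sigma>)
        = (\<Sum>\<sigma>\<in>{\<sigma>\<in>full_subcomplex S C (Suc q). \<tau> \<subseteq> \<sigma>}. incidence \<sigma> \<tau> * c \<sigma>)"
      by (rule sum.mono_neutral_right)
        (use assms Suc in \<open>auto simp: chains_def full_subcomplex_def\<close>)
    then show ?thesis
      using True by (simp add: full_subcomplex_def)
  next
    case False
    then have "c \<sigma> = 0" if "\<tau> \<subseteq> \<sigma>" for \<sigma>
      using c that by (auto simp: chains_def full_subcomplex_def)
    then show ?thesis
      using False by (simp add: full_subcomplex_def)
  qed
  then show ?thesis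
    using Suc by blast
qed simp

lemma cycles_full_subcomplex:
  assumes "finite (S r)"
    and "cycles S r \<subseteq> (chains (full_subcomplex S C) r :: ('a::linorder set \<Rightarrow> 'k::field) set)"
  shows "cycles (full_subcomplex S C) r = (cycles S r :: ('a set \<Rightarrow> 'k) set)"
proof (intro set_eqI iffI)
  fix c :: "'a set \<Rightarrow> 'k" assume "c \<in> cycles (full_subcomplex S C) r"
  then have c: "c \<in> chains (full_subcomplex S C) r" "boundary (full_subcomplex S C) r c = (\<lambda>\<tau>. 0)"
    unfolding cycles_def by blast+
  then have "c \<in> chains S r"
    by (auto simp: chains_def full_subcomplex_def)
  then show "c \<in> cycles S r"
    using c boundary_full_subcomplex[of S r c C, OF assms(1) c(1)] unfolding cycles_def by simp
next
  fix c :: "'a set \<Rightarrow> 'k" assume c: "c \<in> cycles S r"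
  then have "c \<in> chains (full_subcomplex S C) r"
    using assms(2) by blast
  then show "c \<in> cycles (full_subcomplex S C) r"
    using c boundary_full_subcomplex[of S r c C, OF assms(1)] unfolding cycles_def by simp
qed

lemma boundaries_full_subcomplex:
  assumes "finite (S (Suc r))" and "\<forall>\<sigma>\<in>S (Suc r). \<sigma> \<subseteq> C"
  shows "boundaries (full_subcomplex S C) r = boundaries S r"
proof -
  have "full_subcomplex S C (Suc r) = S (Suc r)"
    using assms(2) by (auto simp: full_subcomplex_def)
  then have "chains (full_subcomplex S C) (Suc r) = chains S (Suc r)"
    unfolding chains_def by simp
  moreover have "boundary (full_subcomplex S C) (Suc r) c = boundary S (Suc r) c"
    if "c \<in> chains S (Suc r)" for c
    using boundary_full_subcomplex[of S "Suc r" c C] assms(1) that calculation by metis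
  ultimately show ?thesis
    unfolding boundaries_def by (rule image_cong)
qed

text \<open>The incidence numbers are units, so a face of exactly one support simplex would receive a
nonzero boundary coefficient.\<close>

lemma cycle_face_in_second_support:
  assumes "finite (S (Suc r))" and "c \<in> cycles S (Suc r)"
    and "c \<sigma> \<noteq> 0" and "\<tau> \<in> S r" and "\<tau> \<subseteq> \<sigma>"
  obtains \<sigma>' where "\<sigma>' \<in> S (Suc r)" "\<sigma>' \<noteq> \<sigma>" "\<tau> \<subseteq> \<sigma>'" "c \<sigma>' \<noteq> 0"
proof -
  define A where "A = {\<sigma>'\<in>S (Suc r). \<tau> \<subseteq> \<sigma>'}"
  have "finite A" and "\<sigma> \<in> A"
    using assms(1,2,3,5) by (auto simp: A_def cycles_def chains_def)
  have "\<exists>\<sigma>'\<in>A - {\<sigma>}. c \<sigma>' \<noteq> 0"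
  proof (rule ccontr)
    assume "\<not> ?thesis"
    moreover have "(\<Sum>\<sigma>'\<in>A. incidence \<sigma>' \<tau> * c \<sigma>')
        = incidence \<sigma> \<tau> * c \<sigma> + (\<Sum>\<sigma>'\<in>A - {\<sigma>}. incidence \<sigma>' \<tau> * c \<sigma>')"
      using \<open>finite A\<close> \<open>\<sigma> \<in> A\<close> by (rule sum.remove)
    ultimately have "(\<Sum>\<sigma>'\<in>A. incidence \<sigma>' \<tau> * c \<sigma>') = incidence \<sigma> \<tau> * c \<sigma>"
      by simp
    moreover have "boundary S (Suc r) c = (\<lambda>\<tau>. 0)"
      using assms(2) by (simp only: cycles_def mem_Collect_eq)
    from fun_cong[OF this, of \<tau>] have "(\<Sum>\<sigma>'\<in>A. incidence \<sigma>' \<tau> * c \<sigma>') = 0"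
      using assms(4) by (simp add: A_def)
    moreover have "(incidence \<sigma> \<tau> :: 'b) \<noteq> 0"
      by (simp add: incidence_def)
    ultimately show False
      using assms(3) by simp
  qed
  then show ?thesis
    using that by (auto simp: A_def)
qed

lemma finite_clique_simplices: "finite V \<Longrightarrow> finite (clique_simplices V E r)"
  by (rule finite_subset[of _ "Pow V"]) (auto simp: clique_simplices_def)

lemma clique_simplices_core:
  "clique_simplices (core_vertices V E m) (core_edges V E m)
     = full_subcomplex (clique_simplices V E) (core_vertices V E m)"
proof -
  have "core_vertices V E m \<subseteq> V"
    by (auto simp: core_vertices_def)
  then show ?thesis
    by (auto simp: fun_eq_iff clique_simplices_def full_subcomplex_def core_edges_def)
qed

lemma subset_core_vertices:
  "W \<subseteq> V \<Longrightarrow> min_degree_set E m W \<Longrightarrow> W \<subseteq> core_vertices V E m"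
  unfolding core_vertices_def by auto

lemma min_degree_set_mono: "m \<le> n \<Longrightarrow> min_degree_set E n W \<Longrightarrow> min_degree_set E m W"
  unfolding min_degree_set_def by fastforce

lemma clique_simplex_min_degree:
  assumes "\<sigma> \<in> clique_simplices V E r"
  shows "min_degree_set E r \<sigma>"
  unfolding min_degree_set_def
proof
  fix v assume v: "v \<in> \<sigma>"
  have card\<sigma>: "card \<sigma> = Suc r" and clique: "\<forall>x\<in>\<sigma>. \<forall>y\<in>\<sigma>. x \<noteq> y \<longrightarrow> E x y"
    using assms by (auto simp: clique_simplices_def)
  then have "finite \<sigma>"
    by (intro card_ge_0_finite) simp
  have "\<sigma> - {v} \<subseteq> {u\<in>\<sigma>. E v u}"
    using clique v by auto
  then have "card (\<sigma> - {v}) \<le> card {u\<in>\<sigma>. E v u}"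
    using \<open>finite \<sigma>\<close> by (intro card_mono) auto
  then show "r \<le> card {u\<in>\<sigma>. E v u}"
    using card\<sigma> v \<open>finite \<sigma>\<close> by simp
qed

lemma cycle_support_min_degree:
  fixes c :: "'a::linorder set \<Rightarrow> 'b::field"
  assumes "finite V" and cycle: "c \<in> cycles (clique_simplices V E) (Suc r)"
  shows "min_degree_set E (Suc (Suc r)) (\<Union>{\<sigma>. c \<sigma> \<noteq> 0})"
  unfolding min_degree_set_def
proof
  let ?S = "clique_simplices V E" and ?W = "\<Union>{\<sigma>. c \<sigma> \<noteq> 0}"
  have support: "\<sigma> \<in> ?S (Suc r)" if "c \<sigma> \<noteq> 0" for \<sigma>
    using cycle that by (auto simp: cycles_def chains_def)
  then have "?W \<subseteq> V"
    by (auto simp: clique_simplices_def)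
  then have "finite ?W"
    using assms(1) finite_subset by blast
  fix v assume "v \<in> ?W"
  then obtain \<sigma> where c\<sigma>: "c \<sigma> \<noteq> 0" and v: "v \<in> \<sigma>" by auto
  then have \<sigma>: "\<sigma> \<in> ?S (Suc r)" using support by blast
  then have card\<sigma>: "card \<sigma> = Suc (Suc r)" and clique: "\<forall>x\<in>\<sigma>. \<forall>y\<in>\<sigma>. x \<noteq> y \<longrightarrow> E x y"
    by (auto simp: clique_simplices_def)
  then have "finite \<sigma>"
    by (intro card_ge_0_finite) simp
  have "card (\<sigma> - {v}) = Suc r"
    using card\<sigma> v \<open>finite \<sigma>\<close> by simp
  then obtain w where w: "w \<in> \<sigma>" "w \<noteq> v"
    by (metis Diff_iff card.empty ex_in_conv insertI1 nat.distinct(1))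
  define \<tau> where "\<tau> = \<sigma> - {w}"
  have "\<tau> \<in> ?S r"
    using \<sigma> w \<open>finite \<sigma>\<close> by (auto simp: \<tau>_def clique_simplices_def)
  then obtain \<sigma>' where \<sigma>': "\<sigma>' \<in> ?S (Suc r)" "\<sigma>' \<noteq> \<sigma>" "\<tau> \<subseteq> \<sigma>'" "c \<sigma>' \<noteq> 0"
    using cycle_face_in_second_support[OF finite_clique_simplices[OF assms(1)] cycle c\<sigma>]
    by (auto simp: \<tau>_def)
  have "card \<sigma>' = Suc (Suc r)"
    using \<sigma>'(1) by (simp add: clique_simplices_def)
  then have "\<not> \<sigma>' \<subseteq> \<sigma>"
    using \<sigma>'(2) card\<sigma> \<open>finite \<sigma>\<close> card_subset_eq by metis
  then obtain w' where w': "w' \<in> \<sigma>'" "w' \<notin> \<sigma>"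
    by blast
  have "E v w'"
    using \<sigma>'(1,3) w' v w by (auto simp: \<tau>_def clique_simplices_def)
  then have "insert w' (\<sigma> - {v}) \<subseteq> {u\<in>?W. E v u}"
    using clique v c\<sigma> \<sigma>'(4) w' by auto
  moreover have "finite {u\<in>?W. E v u}"
    using \<open>finite ?W\<close> by (rule rev_finite_subset) blast
  ultimately have "card (insert w' (\<sigma> - {v})) \<le> card {u\<in>?W. E v u}"
    by (intro card_mono)
  then show "Suc (Suc r) \<le> card {u\<in>?W. E v u}"
    using \<open>finite \<sigma>\<close> w' card\<sigma> v by simp
qed

lemma clique_simplex_subset_core:
  assumes "\<sigma> \<in> clique_simplices V E r" and "m \<le> r"
  shows "\<sigma> \<subseteq> core_vertices V E m"
  using assms clique_simplex_min_degree[OF assms(1)]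
  by (intro subset_core_vertices min_degree_set_mono[of m r]) (auto simp: clique_simplices_def)

lemma cycle_support_subset_core:
  fixes c :: "'a::linorder set \<Rightarrow> 'b::field"
  assumes "finite V" and "c \<in> cycles (clique_simplices V E) (Suc r)"
    and "m \<le> Suc (Suc r)" and "c \<sigma> \<noteq> 0"
  shows "\<sigma> \<subseteq> core_vertices V E m"
proof -
  have "\<Union>{\<sigma>. c \<sigma> \<noteq> 0} \<subseteq> V"
    using assms(2) by (auto simp: cycles_def chains_def clique_simplices_def)
  then have "\<Union>{\<sigma>. c \<sigma> \<noteq> 0} \<subseteq> core_vertices V E m"
    using cycle_support_min_degree[OF assms(1,2)] assms(3)
    by (intro subset_core_vertices min_degree_set_mono[of m "Suc (Suc r)"])
  then show ?thesis
    using assms(4) by blast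
qed

theorem mainTheorem2:
  fixes V :: "'a::linorder set" and E :: "'a \<Rightarrow> 'a \<Rightarrow> bool" and k j :: nat
  assumes "simple_graph V E" and "1 \<le> k" and "k \<le> j"
  shows "(\<forall>c::('a set \<Rightarrow> 'k::field). c \<in> cycles (clique_simplices V E) j \<longrightarrow>
            (\<forall>\<sigma>. c \<sigma> \<noteq> 0 \<longrightarrow>
               \<sigma> \<in> clique_simplices (core_vertices V E (k+1)) (core_edges V E (k+1)) j))
       \<and> clique_simplices V E (Suc j)
           \<subseteq> clique_simplices (core_vertices V E (k+1)) (core_edges V E (k+1)) (Suc j)
       \<and> bij_betw
           (incl_induced (clique_simplices V E)
              (clique_simplices (core_vertices V E (k+1)) (core_edges V E (k+1))) j)
           (homology (clique_simplices (core_vertices V E (k+1)) (core_edges V E (k+1))) j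
              :: ('a set \<Rightarrow> 'k) set set)
           (homology (clique_simplices V E) j)"
proof -
  let ?S = "clique_simplices V E" and ?C = "core_vertices V E (k+1)"
  have fin: "finite V"
    using assms(1) by (simp add: simple_graph_def)
  obtain r where j: "j = Suc r"
    using assms(2,3) by (cases j) auto
  have support: "\<forall>\<sigma>. c \<sigma> \<noteq> 0 \<longrightarrow> \<sigma> \<in> full_subcomplex ?S ?C j"
    if "c \<in> cycles ?S j" for c :: "'a set \<Rightarrow> 'k"
    using that cycle_support_subset_core[OF fin, where c=c and r=r and m="k+1"] assms(3) j
    by (auto simp: cycles_def chains_def full_subcomplex_def)
  have top: "\<forall>\<sigma>\<in>?S (Suc j). \<sigma> \<subseteq> ?C"
  proof
    fix \<sigma> assume "\<sigma> \<in> ?S (Suc j)"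
    then show "\<sigma> \<subseteq> ?C"
      by (rule clique_simplex_subset_core) (use assms(3) in simp)
  qed
  have "cycles (full_subcomplex ?S ?C) j = (cycles ?S j :: ('a set \<Rightarrow> 'k) set)"
    using support by (intro cycles_full_subcomplex finite_clique_simplices fin)
      (auto simp: chains_def)
  moreover have "boundaries (full_subcomplex ?S ?C) j = (boundaries ?S j :: ('a set \<Rightarrow> 'k) set)"
    using top by (intro boundaries_full_subcomplex finite_clique_simplices fin)
  ultimately have "bij_betw (incl_induced ?S (full_subcomplex ?S ?C) j)
      (homology (full_subcomplex ?S ?C) j :: ('a set \<Rightarrow> 'k) set set) (homology ?S j)"
    by (rule bij_betw_incl_induced)
  with support top show ?thesis
    unfolding clique_simplices_core by (simp add: full_subcomplex_def subset_iff)
qed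

end
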